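(* Let $h:\mathbb{R}\to\mathbb{R}$ be of class $C^1$, let $x_0\in\mathbb{R}$, and let $\Phi$ be a positive function of class $C^2$ on an interval $]x_-,x_+[$ with $x_-<x_0<x_+$, such that $h(x)\neq\Phi^2(x)$ on $]x_-,x_+[$. Define $u_{\mathtt{top}},u_{\mathtt{bot}}$ as in the context, and \[ \Theta_{\mathtt{top}}(x)=\frac{u'_{\mathtt{top}}(x)}{u_{\mathtt{top}}(x)}=\Phi(x)\frac{\Phi'(x)-\sqrt{\left[h(x)-\Phi^{2}(x)\right]^{2}+\left[\Phi'(x)\right]^{2}}}{h(x)-\Phi^{2}(x)},\quad \Theta_{\mathtt{bot}}(x)=\frac{u'_{\mathtt{bot}}(x)}{u_{\mathtt{bot}}(x)}=\Phi(x)\frac{\Phi'(x)+\sqrt{\left[h(x)-\Phi^{2}(x)\right]^{2}+\left[\Phi'(x)\right]^{2}}}{h(x)-\Phi^{2}(x)}. \] Then $\Theta_{\mathtt{top}}$ and $\Theta_{\mathtt{bot}}$ are two distinct solutions of the Riccati equation $\Theta'(x)+\Theta^2(x)+h(x)=0$ on $]x_-,x_+[$ if and only if $\Phi$ satisfies on $]x_-,x_+[$ \[ \Phi''(x)=\frac{3\Phi^{2}(x)+h(x)}{\Phi^{2}(x)-h(x)}\frac{\left[\Phi'(x)\right]^{2}}{\Phi(x)}-\frac{h'(x)\Phi'(x)}{\Phi^{2}(x)-h(x)}+\frac{\Phi^{4}(x)-h^{2}(x)}{\Phi(x)}. \] Moreover, these relations can be uniquely inverted: \[ \Phi(x)=\sqrt{-\frac{u'_{\mathtt{top}}(x)u'_{\mathtt{bot}}(x)}{u_{\mathtt{top}}(x)u_{\mathtt{bot}}(x)}}=\sqrt{-\Theta_{\mathtt{top}}(x)\Theta_{\mathtt{bot}}(x)}.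 \]
   Context: For $x\in]x_-,x_+[$, $u_{\mathtt{top}}(x)=\exp\left[\int_{x_0}^{x}\Theta_{\mathtt{top}}(\xi)\,d\xi\right]$ and $u_{\mathtt{bot}}(x)=\exp\left[\int_{x_0}^{x}\Theta_{\mathtt{bot}}(\xi)\,d\xi\right]$ with $\Theta_{\mathtt{top}},\Theta_{\mathtt{bot}}$ given by the displayed formulas. The ODE for $\Phi$ is the geodesic equation in explicit form for the metric $g_h=\left[(h(x)-\varPhi^2)^2dx^2+d\varPhi^2\right]/\varPhi^2$ on the upper half plane $\varPhi>0$. *)

theory Defs
  imports "HOL-Analysis.Analysis"
begin

definition oriented_integral :: "real \<Rightarrow> real \<Rightarrow> (real \<Rightarrow> real) \<Rightarrow> real" where
  "oriented_integral a x f =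
     (if a \<le> x then integral {a..x} f else - integral {x..a} f)"

definition theta_top :: "(real \<Rightarrow> real) \<Rightarrow> (real \<Rightarrow> real) \<Rightarrow> (real \<Rightarrow> real) \<Rightarrow> real \<Rightarrow> real" where
  "theta_top h \<Phi> \<Phi>' x =
     \<Phi> x * (\<Phi>' x - sqrt ((h x - (\<Phi> x)\<^sup>2)\<^sup>2 + (\<Phi>' x)\<^sup>2)) / (h x - (\<Phi> x)\<^sup>2)"

definition theta_bot :: "(real \<Rightarrow> real) \<Rightarrow> (real \<Rightarrow> real) \<Rightarrow> (real \<Rightarrow> real) \<Rightarrow> real \<Rightarrow> real" where
  "theta_bot h \<Phi> \<Phi>' x =
     \<Phi> x * (\<Phi>' x + sqrt ((h x - (\<Phi> x)\<^sup>2)\<^sup>2 + (\<Phi>' x)\<^sup>2)) / (h x - (\<Phi> x)\<^sup>2)"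

definition u_of :: "real \<Rightarrow> (real \<Rightarrow> real) \<Rightarrow> real \<Rightarrow> real" where
  "u_of x0 \<Theta> x = exp (oriented_integral x0 x \<Theta>)"

definition riccati_solution :: "(real \<Rightarrow> real) \<Rightarrow> (real \<Rightarrow> real) \<Rightarrow> real set \<Rightarrow> bool" where
  "riccati_solution h \<Theta> S \<longleftrightarrow>
     (\<forall>x\<in>S. \<exists>D. (\<Theta> has_real_derivative D) (at x) \<and> D + (\<Theta> x)\<^sup>2 + h x = 0)"

end

theory Submission
  imports Defs
begin

text \<open>
  Write \<open>H = h - \<Phi>\<^sup>2\<close>, \<open>R = sqrt (H\<^sup>2 + \<Phi>'\<^sup>2)\<close> and \<open>\<Theta>\<^sub>\<sigma> = \<Phi> (\<Phi>' + \<sigma> R) / H\<close>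
  (\<open>\<sigma> = \<mp>1\<close> for \<open>\<Theta>\<^sub>t\<^sub>o\<^sub>p\<close>, \<open>\<Theta>\<^sub>b\<^sub>o\<^sub>t\<close>). Differentiating and using \<open>\<sigma>\<^sup>2 = 1\<close>,
  \<open>R\<^sup>2 = H\<^sup>2 + \<Phi>'\<^sup>2\<close>, one finds the identity
  \<open>\<Theta>\<^sub>\<sigma>' + \<Theta>\<^sub>\<sigma>\<^sup>2 + h = \<Phi> (R + \<sigma> \<Phi>') / (H R) \<cdot> (\<Phi>'' - G)\<close>,
  where \<open>\<Phi>'' = G\<close> is the geodesic equation. Since \<open>R > \<bar>\<Phi>'\<bar>\<close> the factor never vanishes,
  so either \<open>\<Theta>\<^sub>\<sigma>\<close> solves the Riccati equation exactly when \<open>\<Phi>\<close> is a geodesic.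
  Furthermore \<open>\<Theta>\<^sub>t\<^sub>o\<^sub>p \<Theta>\<^sub>b\<^sub>o\<^sub>t = \<Phi>\<^sup>2 (\<Phi>'\<^sup>2 - R\<^sup>2) / H\<^sup>2 = -\<Phi>\<^sup>2\<close> and
  \<open>\<Theta>\<^sub>b\<^sub>o\<^sub>t - \<Theta>\<^sub>t\<^sub>o\<^sub>p = 2 \<Phi> R / H \<noteq> 0\<close>, while \<open>u = exp (\<integral> \<Theta>)\<close> has \<open>u' / u = \<Theta>\<close>
  by the fundamental theorem of calculus, which gives the inversion formulas.
\<close>

definition theta_signed ::
    "real \<Rightarrow> (real \<Rightarrow> real) \<Rightarrow> (real \<Rightarrow> real) \<Rightarrow> (real \<Rightarrow> real) \<Rightarrow> real \<Rightarrow> real" where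
  "theta_signed \<sigma> h \<Phi> \<Phi>' x =
     \<Phi> x * (\<Phi>' x + \<sigma> * sqrt ((h x - (\<Phi> x)\<^sup>2)\<^sup>2 + (\<Phi>' x)\<^sup>2)) / (h x - (\<Phi> x)\<^sup>2)"

lemma theta_top_eq_theta_signed: "theta_top h \<Phi> \<Phi>' = theta_signed (-1) h \<Phi> \<Phi>'"
  by (rule ext) (simp add: theta_top_def theta_signed_def)

lemma theta_bot_eq_theta_signed: "theta_bot h \<Phi> \<Phi>' = theta_signed 1 h \<Phi> \<Phi>'"
  by (rule ext) (simp add: theta_bot_def theta_signed_def)

text \<open>The geodesic equation of \<open>((h - \<Phi>\<^sup>2)\<^sup>2 dx\<^sup>2 + d\<Phi>\<^sup>2) / \<Phi>\<^sup>2\<close>, for geodesics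
  written as graphs \<open>\<Phi> = \<Phi>(x)\<close>, reads \<open>\<Phi>'' = geodesic_accel h h' \<Phi> \<Phi>'\<close>.\<close>

definition geodesic_accel ::
    "(real \<Rightarrow> real) \<Rightarrow> (real \<Rightarrow> real) \<Rightarrow> (real \<Rightarrow> real) \<Rightarrow> (real \<Rightarrow> real) \<Rightarrow> real \<Rightarrow> real" where
  "geodesic_accel h h' \<Phi> \<Phi>' x =
     (3 * (\<Phi> x)\<^sup>2 + h x) / ((\<Phi> x)\<^sup>2 - h x) * (\<Phi>' x)\<^sup>2 / \<Phi> x
     - h' x * \<Phi>' x / ((\<Phi> x)\<^sup>2 - h x)
     + ((\<Phi> x)^4 - (h x)\<^sup>2) / \<Phi> x"

lemma abs_less_sqrt_sum_squares:
  fixes a b :: real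
  assumes "a \<noteq> 0"
  shows "\<bar>b\<bar> < sqrt (a\<^sup>2 + b\<^sup>2)"
proof -
  have "sqrt (b\<^sup>2) < sqrt (a\<^sup>2 + b\<^sup>2)"
    using assms by (intro real_sqrt_less_mono) simp
  then show ?thesis by simp
qed

lemma has_real_derivative_sqrt_sum_squares:
  fixes f g :: "real \<Rightarrow> real"
  assumes "(f has_real_derivative f') (at x)" "(g has_real_derivative g') (at x)"
    and "f x \<noteq> 0 \<or> g x \<noteq> 0"
  shows "((\<lambda>y. sqrt ((f y)\<^sup>2 + (g y)\<^sup>2))
      has_real_derivative (f x * f' + g x * g') / sqrt ((f x)\<^sup>2 + (g x)\<^sup>2)) (at x)"
proof -
  have pos: "0 < (f x)\<^sup>2 + (g x)\<^sup>2" using assms(3) by (simp add: sum_power2_gt_zero_iff)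
  have "((\<lambda>y. (f y)\<^sup>2 + (g y)\<^sup>2) has_real_derivative 2 * (f x * f' + g x * g')) (at x)"
    by (auto intro!: derivative_eq_intros assms(1,2) simp: algebra_simps)
  from DERIV_chain2[OF DERIV_real_sqrt[OF pos] this]
  have "((\<lambda>y. sqrt ((f y)\<^sup>2 + (g y)\<^sup>2)) has_real_derivative
      inverse (sqrt ((f x)\<^sup>2 + (g x)\<^sup>2)) / 2 * (2 * (f x * f' + g x * g'))) (at x)" .
  moreover have "inverse r / 2 * (2 * X) = X / r" for r X :: real by (simp add: field_simps)
  ultimately show ?thesis by (simp only:)
qed

lemma riccati_residual_identity:
  fixes F H P Q R hx hd \<sigma> :: real
  assumes "hx = H + F\<^sup>2" "F \<noteq> 0" "H \<noteq> 0" "R \<noteq> 0" "R\<^sup>2 = H\<^sup>2 + P\<^sup>2" "\<sigma>\<^sup>2 = 1"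
  shows "((P * (P + \<sigma> * R) + F * (Q + \<sigma> * ((H * (hd - 2 * F * P) + P * Q) / R))) * H
            - F * (P + \<sigma> * R) * (hd - 2 * F * P)) / H\<^sup>2
         + (F * (P + \<sigma> * R) / H)\<^sup>2 + hx
       = F * (R + \<sigma> * P) / (H * R)
         * (Q - ((3 * F\<^sup>2 + hx) / (F\<^sup>2 - hx) * P\<^sup>2 / F - hd * P / (F\<^sup>2 - hx)
                 + (F^4 - hx\<^sup>2) / F))"
  using assms by (simp add: field_simps) algebra

lemma has_real_derivative_theta_signed:
  fixes h \<Phi> \<Phi>' :: "real \<Rightarrow> real" and x hd Q \<sigma> :: real
  assumes h_deriv: "(h has_real_derivative hd) (at x)"
    and Phi_deriv: "(\<Phi> has_real_derivative \<Phi>' x) (at x)"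
    and Phi'_deriv: "(\<Phi>' has_real_derivative Q) (at x)"
    and h_ne: "h x \<noteq> (\<Phi> x)\<^sup>2"
  shows "(theta_signed \<sigma> h \<Phi> \<Phi>' has_real_derivative
      (let F = \<Phi> x; P = \<Phi>' x; H = h x - F\<^sup>2; Hd = hd - 2 * F * P; R = sqrt (H\<^sup>2 + P\<^sup>2)
       in ((P * (P + \<sigma> * R) + F * (Q + \<sigma> * ((H * Hd + P * Q) / R))) * H
           - F * (P + \<sigma> * R) * Hd) / H\<^sup>2)) (at x)"
proof -
  define F P H Hd R where "F = \<Phi> x" and "P = \<Phi>' x" and "H = h x - F\<^sup>2"
    and "Hd = hd - 2 * F * P" and "R = sqrt (H\<^sup>2 + P\<^sup>2)"
  have H_nz: "H \<noteq> 0" using h_ne by (simp add: H_def F_def)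
  have den_deriv: "((\<lambda>y. h y - (\<Phi> y)\<^sup>2) has_real_derivative Hd) (at x)"
    unfolding Hd_def F_def P_def by (auto intro!: derivative_eq_intros h_deriv Phi_deriv)
  have R_deriv: "((\<lambda>y. sqrt ((h y - (\<Phi> y)\<^sup>2)\<^sup>2 + (\<Phi>' y)\<^sup>2))
      has_real_derivative (H * Hd + P * Q) / R) (at x)"
    using has_real_derivative_sqrt_sum_squares[OF den_deriv Phi'_deriv] h_ne
    by (simp add: R_def H_def F_def P_def)
  have num_deriv: "((\<lambda>y. \<Phi> y * (\<Phi>' y + \<sigma> * sqrt ((h y - (\<Phi> y)\<^sup>2)\<^sup>2 + (\<Phi>' y)\<^sup>2)))
      has_real_derivative P * (P + \<sigma> * R) + F * (Q + \<sigma> * ((H * Hd + P * Q) / R))) (at x)"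
    using DERIV_mult'[OF Phi_deriv DERIV_add[OF Phi'_deriv DERIV_cmult[OF R_deriv, of \<sigma>]]]
    unfolding F_def[symmetric] P_def[symmetric] H_def[symmetric] R_def[symmetric]
    by (simp add: algebra_simps)
  show ?thesis
    using DERIV_divide[OF num_deriv den_deriv] H_nz
    unfolding theta_signed_def[abs_def] Let_def F_def[symmetric] P_def[symmetric] H_def[symmetric]
      Hd_def[symmetric] R_def[symmetric]
    by (simp add: power2_eq_square)
qed

lemma theta_signed_riccati_residual:
  fixes h h' \<Phi> \<Phi>' :: "real \<Rightarrow> real" and x Q \<sigma> :: real
  assumes h_deriv: "(h has_real_derivative h' x) (at x)"
    and Phi_deriv: "(\<Phi> has_real_derivative \<Phi>' x) (at x)"
    and Phi'_deriv: "(\<Phi>' has_real_derivative Q) (at x)"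
    and Phi_nz: "\<Phi> x \<noteq> 0" and h_ne: "h x \<noteq> (\<Phi> x)\<^sup>2" and sign: "\<sigma> = 1 \<or> \<sigma> = -1"
  obtains c where "c \<noteq> 0"
    "(theta_signed \<sigma> h \<Phi> \<Phi>' has_real_derivative
        c * (Q - geodesic_accel h h' \<Phi> \<Phi>' x) - (theta_signed \<sigma> h \<Phi> \<Phi>' x)\<^sup>2 - h x) (at x)"
proof -
  define F P H R where "F = \<Phi> x" and "P = \<Phi>' x" and "H = h x - F\<^sup>2" and "R = sqrt (H\<^sup>2 + P\<^sup>2)"
  have H_nz: "H \<noteq> 0" using h_ne by (simp add: H_def F_def)
  have R_gt: "\<bar>P\<bar> < R" unfolding R_def using H_nz by (rule abs_less_sqrt_sum_squares)
  have R_sq: "R\<^sup>2 = H\<^sup>2 + P\<^sup>2" by (simp add: R_def)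
  have R_nz: "R \<noteq> 0" and sigma_sq: "\<sigma>\<^sup>2 = 1" using R_gt sign by auto
  define c where "c = F * (R + \<sigma> * P) / (H * R)"
  have c_nz: "c \<noteq> 0"
    using Phi_nz H_nz R_gt sign by (auto simp: c_def F_def)
  define D where "D = ((P * (P + \<sigma> * R) + F * (Q + \<sigma> * ((H * (h' x - 2 * F * P) + P * Q) / R))) * H
      - F * (P + \<sigma> * R) * (h' x - 2 * F * P)) / H\<^sup>2"
  have "(theta_signed \<sigma> h \<Phi> \<Phi>' has_real_derivative D) (at x)"
    using has_real_derivative_theta_signed[where \<Phi>' = \<Phi>' and \<sigma> = \<sigma>,
        OF h_deriv Phi_deriv Phi'_deriv h_ne]
    unfolding Let_def F_def[symmetric] P_def[symmetric] H_def[symmetric] R_def[symmetric] D_def .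
  moreover have "D = c * (Q - geodesic_accel h h' \<Phi> \<Phi>' x) - (theta_signed \<sigma> h \<Phi> \<Phi>' x)\<^sup>2 - h x"
  proof -
    have "h x = H + F\<^sup>2" "F \<noteq> 0" using Phi_nz by (simp_all add: H_def F_def)
    from riccati_residual_identity[OF this H_nz R_nz R_sq sigma_sq, of Q "h' x"] show ?thesis
      unfolding geodesic_accel_def theta_signed_def c_def D_def
      unfolding F_def[symmetric] P_def[symmetric] H_def[symmetric] R_def[symmetric] by linarith
  qed
  ultimately show ?thesis using that[OF c_nz] by simp
qed

lemma riccati_solution_theta_signed_iff:
  fixes h h' \<Phi> \<Phi>' \<Phi>'' :: "real \<Rightarrow> real" and S :: "real set" and \<sigma> :: real
  assumes h_deriv: "\<And>x. x \<in> S \<Longrightarrow> (h has_real_derivative h' x) (at x)"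
    and Phi_deriv: "\<And>x. x \<in> S \<Longrightarrow> (\<Phi> has_real_derivative \<Phi>' x) (at x)"
    and Phi'_deriv: "\<And>x. x \<in> S \<Longrightarrow> (\<Phi>' has_real_derivative \<Phi>'' x) (at x)"
    and Phi_nz: "\<And>x. x \<in> S \<Longrightarrow> \<Phi> x \<noteq> 0"
    and h_ne: "\<And>x. x \<in> S \<Longrightarrow> h x \<noteq> (\<Phi> x)\<^sup>2"
    and sign: "\<sigma> = 1 \<or> \<sigma> = -1"
  shows "riccati_solution h (theta_signed \<sigma> h \<Phi> \<Phi>') S
    \<longleftrightarrow> (\<forall>x\<in>S. \<Phi>'' x = geodesic_accel h h' \<Phi> \<Phi>' x)"
proof -
  have "(\<exists>D. (theta_signed \<sigma> h \<Phi> \<Phi>' has_real_derivative D) (at x)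
            \<and> D + (theta_signed \<sigma> h \<Phi> \<Phi>' x)\<^sup>2 + h x = 0)
        \<longleftrightarrow> \<Phi>'' x = geodesic_accel h h' \<Phi> \<Phi>' x" if x: "x \<in> S" for x
  proof -
    obtain c where "c \<noteq> 0" and deriv: "(theta_signed \<sigma> h \<Phi> \<Phi>' has_real_derivative
        c * (\<Phi>'' x - geodesic_accel h h' \<Phi> \<Phi>' x) - (theta_signed \<sigma> h \<Phi> \<Phi>' x)\<^sup>2 - h x) (at x)"
      using theta_signed_riccati_residual[where h'=h', OF h_deriv[OF x] Phi_deriv[OF x] Phi'_deriv[OF x]
          Phi_nz[OF x] h_ne[OF x] sign] .
    show ?thesis
    proof
      assume "\<exists>D. (theta_signed \<sigma> h \<Phi> \<Phi>' has_real_derivative D) (at x)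
          \<and> D + (theta_signed \<sigma> h \<Phi> \<Phi>' x)\<^sup>2 + h x = 0"
      then obtain D where D: "(theta_signed \<sigma> h \<Phi> \<Phi>' has_real_derivative D) (at x)"
          and "D + (theta_signed \<sigma> h \<Phi> \<Phi>' x)\<^sup>2 + h x = 0" by blast
      with DERIV_unique[OF deriv D] have "c * (\<Phi>'' x - geodesic_accel h h' \<Phi> \<Phi>' x) = 0" by linarith
      with \<open>c \<noteq> 0\<close> show "\<Phi>'' x = geodesic_accel h h' \<Phi> \<Phi>' x" by simp
    next
      assume "\<Phi>'' x = geodesic_accel h h' \<Phi> \<Phi>' x"
      with deriv show "\<exists>D. (theta_signed \<sigma> h \<Phi> \<Phi>' has_real_derivative D) (at x)
          \<and> D + (theta_signed \<sigma> h \<Phi> \<Phi>' x)\<^sup>2 + h x = 0" by auto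
    qed
  qed
  then show ?thesis unfolding riccati_solution_def by blast
qed

lemma riccati_solution_theta_top_bot_iff:
  fixes h h' \<Phi> \<Phi>' \<Phi>'' :: "real \<Rightarrow> real" and S :: "real set"
  assumes "\<And>x. x \<in> S \<Longrightarrow> (h has_real_derivative h' x) (at x)"
    and "\<And>x. x \<in> S \<Longrightarrow> (\<Phi> has_real_derivative \<Phi>' x) (at x)"
    and "\<And>x. x \<in> S \<Longrightarrow> (\<Phi>' has_real_derivative \<Phi>'' x) (at x)"
    and "\<And>x. x \<in> S \<Longrightarrow> \<Phi> x \<noteq> 0"
    and "\<And>x. x \<in> S \<Longrightarrow> h x \<noteq> (\<Phi> x)\<^sup>2"
  shows "riccati_solution h (theta_top h \<Phi> \<Phi>') S \<and> riccati_solution h (theta_bot h \<Phi> \<Phi>') S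
    \<longleftrightarrow> (\<forall>x\<in>S. \<Phi>'' x = geodesic_accel h h' \<Phi> \<Phi>' x)"
  using riccati_solution_theta_signed_iff[where \<sigma> = 1, OF assms]
    riccati_solution_theta_signed_iff[where \<sigma> = "-1", OF assms]
  by (simp add: theta_top_eq_theta_signed theta_bot_eq_theta_signed)

lemma continuous_on_theta_signed:
  fixes h h' \<Phi> \<Phi>' \<Phi>'' :: "real \<Rightarrow> real" and S :: "real set" and \<sigma> :: real
  assumes "\<And>x. x \<in> S \<Longrightarrow> (h has_real_derivative h' x) (at x)"
    and "\<And>x. x \<in> S \<Longrightarrow> (\<Phi> has_real_derivative \<Phi>' x) (at x)"
    and "\<And>x. x \<in> S \<Longrightarrow> (\<Phi>' has_real_derivative \<Phi>'' x) (at x)"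
    and "\<And>x. x \<in> S \<Longrightarrow> \<Phi> x \<noteq> 0"
    and "\<And>x. x \<in> S \<Longrightarrow> h x \<noteq> (\<Phi> x)\<^sup>2"
    and "\<sigma> = 1 \<or> \<sigma> = -1"
  shows "continuous_on S (theta_signed \<sigma> h \<Phi> \<Phi>')"
proof (intro continuous_at_imp_continuous_on ballI)
  fix x assume "x \<in> S"
  then obtain c where "(theta_signed \<sigma> h \<Phi> \<Phi>' has_real_derivative
      c * (\<Phi>'' x - geodesic_accel h h' \<Phi> \<Phi>' x) - (theta_signed \<sigma> h \<Phi> \<Phi>' x)\<^sup>2 - h x) (at x)"
    using theta_signed_riccati_residual assms by metis
  then show "isCont (theta_signed \<sigma> h \<Phi> \<Phi>') x" by (rule DERIV_isCont)
qed

lemma theta_top_mult_theta_bot: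
  assumes "h x \<noteq> (\<Phi> x)\<^sup>2"
  shows "theta_top h \<Phi> \<Phi>' x * theta_bot h \<Phi> \<Phi>' x = - (\<Phi> x)\<^sup>2"
proof -
  define H P R where "H = h x - (\<Phi> x)\<^sup>2" and "P = \<Phi>' x" and "R = sqrt (H\<^sup>2 + P\<^sup>2)"
  have "H \<noteq> 0" using assms by (simp add: H_def)
  have "theta_top h \<Phi> \<Phi>' x * theta_bot h \<Phi> \<Phi>' x = (\<Phi> x)\<^sup>2 * (P\<^sup>2 - R\<^sup>2) / H\<^sup>2"
    by (simp add: theta_top_def theta_bot_def H_def P_def R_def power2_eq_square algebra_simps)
  also have "P\<^sup>2 - R\<^sup>2 = - H\<^sup>2" by (simp add: R_def)
  finally show ?thesis using \<open>H \<noteq> 0\<close> by simp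
qed

lemma theta_top_neq_theta_bot:
  assumes "\<Phi> x \<noteq> 0" "h x \<noteq> (\<Phi> x)\<^sup>2"
  shows "theta_top h \<Phi> \<Phi>' x \<noteq> theta_bot h \<Phi> \<Phi>' x"
proof -
  have "theta_bot h \<Phi> \<Phi>' x - theta_top h \<Phi> \<Phi>' x
      = 2 * \<Phi> x * sqrt ((h x - (\<Phi> x)\<^sup>2)\<^sup>2 + (\<Phi>' x)\<^sup>2) / (h x - (\<Phi> x)\<^sup>2)"
    by (simp add: theta_top_def theta_bot_def diff_divide_distrib[symmetric] algebra_simps)
  moreover have "sqrt ((h x - (\<Phi> x)\<^sup>2)\<^sup>2 + (\<Phi>' x)\<^sup>2) \<noteq> 0"
    using assms(2) by simp
  ultimately show ?thesis using assms by auto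
qed

lemma oriented_integral_eq_diff:
  fixes f :: "real \<Rightarrow> real"
  assumes "a \<le> x0" "a \<le> y" "f integrable_on {a..max x0 y}"
  shows "oriented_integral x0 y f = integral {a..y} f - integral {a..x0} f"
proof (cases "x0 \<le> y")
  case True
  with assms have "integral {a..x0} f + integral {x0..y} f = integral {a..y} f"
    by (intro Henstock_Kurzweil_Integration.integral_combine) (auto simp: max_def)
  with True show ?thesis by (simp add: oriented_integral_def)
next
  case False
  with assms have "integral {a..y} f + integral {y..x0} f = integral {a..x0} f"
    by (intro Henstock_Kurzweil_Integration.integral_combine) (auto simp: max_def)
  with False show ?thesis by (simp add: oriented_integral_def)
qed

lemma has_real_derivative_oriented_integral:
  fixes f :: "real \<Rightarrow> real"
  assumes cont: "continuous_on {a<..<b} f" and "x0 \<in> {a<..<b}" "x \<in> {a<..<b}"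
  shows "((\<lambda>y. oriented_integral x0 y f) has_real_derivative f x) (at x)"
proof -
  define c d where "c = (a + min x x0) / 2" and "d = (b + max x x0) / 2"
  have cd: "a < c" "c < min x x0" "max x x0 < d" "d < b"
    using assms(2,3) by (auto simp: c_def d_def)
  then have cont_cd: "continuous_on {c..d} f"
    by (auto intro: continuous_on_subset[OF cont])
  have "((\<lambda>y. integral {c..y} f) has_real_derivative f x) (at x within {c..d})"
    using cd by (intro integral_has_real_derivative[OF cont_cd]) auto
  moreover have "at x within {c..d} = at x"
    using cd by (intro at_within_interior) auto
  ultimately have diff_deriv:
      "((\<lambda>y. integral {c..y} f - integral {c..x0} f) has_real_derivative f x) (at x)"
    using DERIV_diff[where g = "\<lambda>_. integral {c..x0} f" and E = 0] by auto
  have diff_eq: "integral {c..y} f - integral {c..x0} f = oriented_integral x0 y f"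
    if "y \<in> {c<..<d}" for y
    using that cd
    by (intro oriented_integral_eq_diff[symmetric] integrable_continuous_real
        continuous_on_subset[OF cont_cd]) auto
  show ?thesis
    using diff_deriv
    by (rule has_field_derivative_transform_within_open[of _ _ _ "{c<..<d}"]) (use cd diff_eq in auto)
qed

lemma u_of_has_real_derivative:
  fixes \<Theta> :: "real \<Rightarrow> real"
  assumes "continuous_on {a<..<b} \<Theta>" "x0 \<in> {a<..<b}" "x \<in> {a<..<b}"
  shows "(u_of x0 \<Theta> has_real_derivative \<Theta> x * u_of x0 \<Theta> x) (at x)"
  using DERIV_chain2[OF DERIV_exp has_real_derivative_oriented_integral[OF assms]]
  unfolding u_of_def[abs_def] by (simp add: mult.commute)

lemma logarithmic_deriv_u_of:
  fixes \<Theta> :: "real \<Rightarrow> real"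
  assumes "continuous_on {a<..<b} \<Theta>" "x0 \<in> {a<..<b}" "x \<in> {a<..<b}"
  shows "deriv (u_of x0 \<Theta>) x / u_of x0 \<Theta> x = \<Theta> x"
  using DERIV_imp_deriv[OF u_of_has_real_derivative[OF assms]] by (simp add: u_of_def)

theorem corollary2p11:
  fixes h h' \<Phi> \<Phi>' \<Phi>'' :: "real \<Rightarrow> real" and x0 xm xp :: real
  assumes h_deriv: "\<And>x. (h has_real_derivative h' x) (at x)"
    and h'_cont: "continuous_on UNIV h'"
    and interval: "xm < x0" "x0 < xp"
    and Phi_deriv: "\<And>x. x \<in> {xm<..<xp} \<Longrightarrow> (\<Phi> has_real_derivative \<Phi>' x) (at x)"
    and Phi'_deriv: "\<And>x. x \<in> {xm<..<xp} \<Longrightarrow> (\<Phi>' has_real_derivative \<Phi>'' x) (at x)"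
    and Phi''_cont: "continuous_on {xm<..<xp} \<Phi>''"
    and Phi_pos: "\<And>x. x \<in> {xm<..<xp} \<Longrightarrow> \<Phi> x > 0"
    and h_ne: "\<And>x. x \<in> {xm<..<xp} \<Longrightarrow> h x \<noteq> (\<Phi> x)\<^sup>2"
  shows "((riccati_solution h (theta_top h \<Phi> \<Phi>') {xm<..<xp}
          \<and> riccati_solution h (theta_bot h \<Phi> \<Phi>') {xm<..<xp}
          \<and> (\<forall>x\<in>{xm<..<xp}. theta_top h \<Phi> \<Phi>' x \<noteq> theta_bot h \<Phi> \<Phi>' x))
         \<longleftrightarrow>
         (\<forall>x\<in>{xm<..<xp}.
            \<Phi>'' x = (3 * (\<Phi> x)\<^sup>2 + h x) / ((\<Phi> x)\<^sup>2 - h x) * (\<Phi>' x)\<^sup>2 / \<Phi> x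
                     - h' x * \<Phi>' x / ((\<Phi> x)\<^sup>2 - h x)
                     + ((\<Phi> x)^4 - (h x)\<^sup>2) / \<Phi> x))
      \<and> (\<forall>x\<in>{xm<..<xp}.
           theta_top h \<Phi> \<Phi>' x
             = deriv (u_of x0 (theta_top h \<Phi> \<Phi>')) x / u_of x0 (theta_top h \<Phi> \<Phi>') x
         \<and> theta_bot h \<Phi> \<Phi>' x
             = deriv (u_of x0 (theta_bot h \<Phi> \<Phi>')) x / u_of x0 (theta_bot h \<Phi> \<Phi>') x
         \<and> \<Phi> x = sqrt (- (deriv (u_of x0 (theta_top h \<Phi> \<Phi>')) x
                            * deriv (u_of x0 (theta_bot h \<Phi> \<Phi>')) x)
                         / (u_of x0 (theta_top h \<Phi> \<Phi>') x * u_of x0 (theta_bot h \<Phi> \<Phi>') x))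
         \<and> \<Phi> x = sqrt (- (theta_top h \<Phi> \<Phi>' x * theta_bot h \<Phi> \<Phi>' x)))"
proof -
  let ?S = "{xm<..<xp}"
  have Phi_nz: "\<And>x. x \<in> ?S \<Longrightarrow> \<Phi> x \<noteq> 0" using Phi_pos by force
  have x0_in: "x0 \<in> ?S" using interval by simp
  note theta_facts = h_deriv Phi_deriv Phi'_deriv Phi_nz h_ne
  have cont: "continuous_on ?S (theta_top h \<Phi> \<Phi>')" "continuous_on ?S (theta_bot h \<Phi> \<Phi>')"
    using continuous_on_theta_signed[where S = ?S and \<sigma> = 1, OF theta_facts]
      continuous_on_theta_signed[where S = ?S and \<sigma> = "-1", OF theta_facts]
    by (simp_all add: theta_top_eq_theta_signed theta_bot_eq_theta_signed)
  have log_deriv: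
      "theta_top h \<Phi> \<Phi>' x = deriv (u_of x0 (theta_top h \<Phi> \<Phi>')) x / u_of x0 (theta_top h \<Phi> \<Phi>') x"
      "theta_bot h \<Phi> \<Phi>' x = deriv (u_of x0 (theta_bot h \<Phi> \<Phi>')) x / u_of x0 (theta_bot h \<Phi> \<Phi>') x"
    if "x \<in> ?S" for x
    using logarithmic_deriv_u_of[OF cont(1) x0_in that] logarithmic_deriv_u_of[OF cont(2) x0_in that]
    by simp_all
  have Phi_eq: "\<Phi> x = sqrt (- (theta_top h \<Phi> \<Phi>' x * theta_bot h \<Phi> \<Phi>' x))" if "x \<in> ?S" for x
    using theta_top_mult_theta_bot[where h = h and \<Phi> = \<Phi> and x = x, OF h_ne[OF that]]
      Phi_pos[OF that] by simp
  have Phi_eq_u: "\<Phi> x = sqrt (- (deriv (u_of x0 (theta_top h \<Phi> \<Phi>')) x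
                            * deriv (u_of x0 (theta_bot h \<Phi> \<Phi>')) x)
                         / (u_of x0 (theta_top h \<Phi> \<Phi>') x * u_of x0 (theta_bot h \<Phi> \<Phi>') x))"
    if "x \<in> ?S" for x
    using Phi_eq[OF that] unfolding log_deriv[OF that] by simp
  show ?thesis
    using riccati_solution_theta_top_bot_iff[where S = ?S, OF theta_facts] theta_top_neq_theta_bot Phi_nz h_ne
      log_deriv Phi_eq Phi_eq_u
    unfolding geodesic_accel_def by blast
qed

end
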